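(* Let $f:\mathbb{N}\to\mathbb{N}$ be a sub-linear order and let $f^*$ be its star-transform. Then: (1) $f^*$ is a sub-linear order; (2) if $f$ is computable then $f^*$ is computable; (3) if $f$ is upper semi-computable then $f^*$ is upper semi-computable; (4) for all $n,i\in\mathbb{N}$, $0\le f^*(n)-f^*(f^{(i)}(n))\le i$.
   Context: An order is a total, non-decreasing, unbounded function $\mathbb{N}\to\mathbb{N}$; it is sub-linear if $f(n)=o(n)$. $f^{(k)}$ denotes the $k$-fold iterate of $f$ ($f^{(0)}$ is the identity). For a sub-linear order $f$, let $p_f=\max\{n : f(n)\ge n\}$ (well defined by sub-linearity), and define the star-transform $f^*(n)=\min\{k : f^{(k)}(n)\le p_f\}$. A function $g:\mathbb{N}\to\mathbb{N}$ is upper semi-computable if the predicate "$g(n)\le k$" is computably enumerable uniformly in $n,k$. *)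

theory Defs
  imports Main "HOL-Library.Landau_Symbols"
begin

definition is_order :: "(nat \<Rightarrow> nat) \<Rightarrow> bool" where
  "is_order f \<longleftrightarrow> mono f \<and> (\<forall>m. \<exists>n. m \<le> f n)"

definition sublinear_order :: "(nat \<Rightarrow> nat) \<Rightarrow> bool" where
  "sublinear_order f \<longleftrightarrow> is_order f \<and> (\<lambda>n. real (f n)) \<in> o(\<lambda>n. real n)"

text \<open>p_f = max {n. f n >= n} (nonempty since f 0 >= 0, finite by sub-linearity).\<close>
definition pf :: "(nat \<Rightarrow> nat) \<Rightarrow> nat" where
  "pf f = Max {n. f n \<ge> n}"

definition star :: "(nat \<Rightarrow> nat) \<Rightarrow> nat \<Rightarrow> nat" where
  "star f n = (LEAST k. (f ^^ k) n \<le> pf f)"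

datatype recf =
    Zero
  | Succ
  | Proj nat
  | Comp recf "recf list"
  | Prim recf recf
  | Mini recf

inductive eval :: "recf \<Rightarrow> nat list \<Rightarrow> nat \<Rightarrow> bool" where
  eval_Zero: "eval Zero xs 0"
| eval_Succ: "eval Succ (x # xs) (Suc x)"
| eval_Proj: "i < length xs \<Longrightarrow> eval (Proj i) xs (xs ! i)"
| eval_Comp: "list_all2 (\<lambda>g y. eval g xs y) gs ys \<Longrightarrow> eval f ys z \<Longrightarrow> eval (Comp f gs) xs z"
| eval_Prim0: "eval f xs y \<Longrightarrow> eval (Prim f g) (0 # xs) y"
| eval_PrimS: "eval (Prim f g) (n # xs) y \<Longrightarrow> eval g (n # y # xs) z
                 \<Longrightarrow> eval (Prim f g) (Suc n # xs) z"
| eval_Mini: "eval f (n # xs) 0 \<Longrightarrow> (\<forall>m<n. \<exists>y. eval f (m # xs) (Suc y))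
                 \<Longrightarrow> eval (Mini f) xs n"

definition computable :: "(nat \<Rightarrow> nat) \<Rightarrow> bool" where
  "computable g \<longleftrightarrow> (\<exists>c. \<forall>n. eval c [n] (g n))"

text \<open>Upper semi-computable: the predicate g n \<le> k is c.e. uniformly in n, k,
  i.e. it is the domain of a binary partial recursive function.\<close>
definition upper_semicomputable :: "(nat \<Rightarrow> nat) \<Rightarrow> bool" where
  "upper_semicomputable g \<longleftrightarrow> (\<exists>c. \<forall>n k. g n \<le> k \<longleftrightarrow> (\<exists>y. eval c [n, k] y))"

end

theory Submission
  imports Defs "HOL-Real_Asymp.Real_Asymp"
begin

text \<open>Above \<open>p_f\<close> the order \<open>f\<close> strictly decreases its argument, while \<open>[0, p_f]\<close> is \<open>f\<close>-invariant
  because \<open>f p_f = p_f\<close>. Hence \<open>f\<^sup>* n \<le> k\<close> iff \<open>f\<^sup>k n \<le> p_f\<close>, and \<open>f\<^sup>* (f n) = f\<^sup>* n - 1\<close>, which gives (4).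
  As \<open>f\<close> eventually quarters its argument, \<open>2 ^ f\<^sup>* n = O(n)\<close>, so \<open>f\<^sup>*\<close> is logarithmic, hence sub-linear.
  If \<open>f\<close> is computable, \<open>f\<^sup>* n\<close> is the least \<open>k\<close> with \<open>f\<^sup>k n \<le> p_f\<close>, found by unbounded search.
  If only \<open>f a \<le> b\<close> is enumerable, one runs that enumeration for \<open>t\<close> steps on every iterate: this yields
  upper bounds for \<open>f\<^sup>k n\<close> that are exact for large \<open>t\<close>, so \<open>f\<^sup>k n \<le> p_f\<close> holds iff a search over \<open>t\<close>
  terminates. The step-bounded run is itself a primitive recursive program, obtained by compiling
  a fuel-bounded interpreter of the program text.\<close>

section \<open>Iterating a sub-linear order\<close>

lemma sublinear_order_eventually_le:
  assumes "sublinear_order f" and "c > 0"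
  shows "eventually (\<lambda>n. real (f n) \<le> c * real n) at_top"
  using landau_o.smallD[of "\<lambda>n. real (f n)" at_top real c] assms
  by (simp add: sublinear_order_def)

lemma sublinear_order_finite_le_self:
  assumes "sublinear_order f"
  shows "finite {n. n \<le> f n}"
proof -
  obtain N where N: "\<And>n. n \<ge> N \<Longrightarrow> real (f n) \<le> real n / 2"
    using sublinear_order_eventually_le[OF assms, of "1/2"] by (auto simp: eventually_at_top_linorder)
  have "n \<le> max N 1" if "n \<le> f n" for n
    using N[of n] that by (cases "N \<le> n") auto
  then have "{n. n \<le> f n} \<subseteq> {..max N 1}"
    by blast
  then show ?thesis
    using finite_subset by blast
qed

context
  fixes f :: "nat \<Rightarrow> nat"
  assumes sublinear: "sublinear_order f"
begin

lemma sublinear_order_imp_mono: "mono f"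
  using sublinear by (simp add: sublinear_order_def is_order_def)

lemma le_pf: "n \<le> f n \<Longrightarrow> n \<le> pf f"
  unfolding pf_def by (rule Max_ge[OF sublinear_order_finite_le_self[OF sublinear]]) simp

lemma pf_le_apply: "pf f \<le> f (pf f)"
proof -
  have "{n. n \<le> f n} \<noteq> {}"
    by auto
  then have "pf f \<in> {n. n \<le> f n}"
    unfolding pf_def using Max_in sublinear_order_finite_le_self[OF sublinear] by blast
  then show ?thesis
    by simp
qed

lemma apply_less_if_pf_less: "pf f < n \<Longrightarrow> f n < n"
  using le_pf by (meson leD leI)

lemma apply_pf: "f (pf f) = pf f"
  using pf_le_apply le_pf monoD[OF sublinear_order_imp_mono pf_le_apply] by (simp add: le_antisym)

lemma apply_le_pf: "n \<le> pf f \<Longrightarrow> f n \<le> pf f"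
  using monoD[OF sublinear_order_imp_mono] apply_pf by metis

lemma funpow_le_pf: "n \<le> pf f \<Longrightarrow> (f ^^ k) n \<le> pf f"
  by (induction k) (auto intro: apply_le_pf)

lemma ex_funpow_le_pf: "\<exists>k. (f ^^ k) n \<le> pf f"
proof (induction n rule: less_induct)
  case (less n)
  show ?case
  proof (cases "n \<le> pf f")
    case True
    then show ?thesis
      by (metis funpow_0)
  next
    case False
    then obtain k where "(f ^^ k) (f n) \<le> pf f"
      using less apply_less_if_pf_less by (meson not_le)
    then have "(f ^^ Suc k) n \<le> pf f"
      by (simp add: funpow_Suc_right del: funpow.simps)
    then show ?thesis ..
  qed
qed

lemma star_le_iff: "star f n \<le> k \<longleftrightarrow> (f ^^ k) n \<le> pf f"
proof
  assume "star f n \<le> k"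
  moreover have "(f ^^ star f n) n \<le> pf f"
    unfolding star_def by (rule LeastI_ex[OF ex_funpow_le_pf])
  ultimately show "(f ^^ k) n \<le> pf f"
    using funpow_le_pf by (metis funpow_add le_add_diff_inverse2 o_apply)
next
  assume "(f ^^ k) n \<le> pf f"
  then show "star f n \<le> k"
    unfolding star_def by (rule Least_le)
qed

lemma star_apply: "star f (f n) = star f n - 1"
proof -
  have "star f (f n) \<le> k \<longleftrightarrow> star f n - 1 \<le> k" for k
    using star_le_iff[of "f n" k] star_le_iff[of n "Suc k"]
    by (simp add: funpow_Suc_right del: funpow.simps) linarith
  then show ?thesis
    by (metis le_antisym le_refl)
qed

lemma star_funpow: "star f ((f ^^ i) n) = star f n - i"
  by (induction i) (simp_all add: star_apply)

lemma mono_star: "mono (star f)"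
proof
  fix n m :: nat
  assume "n \<le> m"
  then have "(f ^^ star f m) n \<le> (f ^^ star f m) m"
    by (rule funpow_mono[OF sublinear_order_imp_mono])
  also have "\<dots> \<le> pf f"
    using star_le_iff by blast
  finally show "star f n \<le> star f m"
    using star_le_iff by blast
qed

lemma star_unbounded: "\<exists>n. k \<le> star f n"
proof -
  have "\<exists>n. pf f < (f ^^ k) n"
  proof (induction k)
    case 0
    then show ?case
      by (metis funpow_0 lessI)
  next
    case (Suc k)
    then obtain n where n: "pf f < (f ^^ k) n" ..
    obtain m where "n \<le> f m"
      using sublinear by (auto simp: sublinear_order_def is_order_def)
    then have "(f ^^ k) n \<le> (f ^^ Suc k) m"
      using funpow_mono[OF sublinear_order_imp_mono] by (simp add: funpow_Suc_right del: funpow.simps)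
    with n show ?case
      by (meson less_le_trans)
  qed
  then show ?thesis
    using star_le_iff by (meson le_cases leD)
qed

lemma two_power_star_le: "\<exists>K>0. \<forall>n. 2 ^ star f n \<le> K * (n + 1)"
proof -
  obtain N0 where N0: "\<And>n. n \<ge> N0 \<Longrightarrow> real (f n) \<le> real n / 4"
    using sublinear_order_eventually_le[OF sublinear, of "1/4"] by (auto simp: eventually_at_top_linorder)
  define N where "N = max N0 (pf f + 2)"
  define K :: nat where "K = 2 ^ star f N"
  have "2 ^ star f n \<le> K * (n + 1)" for n
  proof (induction n rule: less_induct)
    case (less n)
    show ?case
    proof (cases "n < N")
      case True
      then have "2 ^ star f n \<le> K"
        unfolding K_def using monoD[OF mono_star] by (simp add: power_increasing)
      then show ?thesis
        by (simp add: trans_le_add1)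
    next
      case False
      then have "pf f < n" "2 \<le> n" "N0 \<le> n"
        by (auto simp: N_def)
      then have "4 * f n \<le> n"
        using N0[of n] by linarith
      have "f n < n" and star_n: "star f n = Suc (star f (f n))"
        using \<open>pf f < n\<close> apply_less_if_pf_less star_apply[of n] star_le_iff[of n 0] by auto
      have "2 ^ star f n = 2 * 2 ^ star f (f n)"
        by (simp add: star_n)
      also have "\<dots> \<le> 2 * (K * (f n + 1))"
        using less[OF \<open>f n < n\<close>] by simp
      also have "\<dots> = K * (2 * f n + 2)"
        by simp
      also have "\<dots> \<le> K * (n + 1)"
        using \<open>4 * f n \<le> n\<close> \<open>2 \<le> n\<close> by (intro mult_le_mono2) linarith
      finally show ?thesis .
    qed
  qed
  then show ?thesis
    by (intro exI[of _ K]) (simp add: K_def)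
qed

lemma star_smallo: "(\<lambda>n. real (star f n)) \<in> o(\<lambda>n. real n)"
proof -
  obtain K :: nat where "K > 0" and K: "\<And>n. 2 ^ star f n \<le> K * (n + 1)"
    using two_power_star_le by blast
  have "real (star f n) \<le> \<bar>log 2 (real K * (real n + 1))\<bar>" for n
    using le_log2_of_power[OF K[of n]] by (metis abs_ge_self order_trans of_nat_1 of_nat_add of_nat_mult)
  then have "(\<lambda>n. real (star f n)) \<in> O(\<lambda>n. log 2 (real K * (real n + 1)))"
    by (intro bigoI[where c=1] always_eventually) simp
  also have "(\<lambda>n. log 2 (real K * (real n + 1))) \<in> o(\<lambda>n. real n)"
    using \<open>K > 0\<close> by real_asymp
  finally show ?thesis .
qed

lemma sublinear_order_star: "sublinear_order (star f)"
  unfolding sublinear_order_def is_order_def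
  using mono_star star_unbounded star_smallo by blast

end

section \<open>Basic recursive functions\<close>

lemma eval_Prim_rec_nat:
  assumes "eval g xs b" and "\<And>j s. eval h (j # s # xs) (F j s)"
  shows "eval (Prim g h) (n # xs) (rec_nat b F n)"
  by (induction n) (auto intro: eval.intros assms)

lemma eval_Comp1: "eval g xs y \<Longrightarrow> eval f [y] z \<Longrightarrow> eval (Comp f [g]) xs z"
  by (rule eval_Comp[where ys="[y]"]) auto

lemma eval_Comp2: "eval g1 xs y1 \<Longrightarrow> eval g2 xs y2 \<Longrightarrow> eval f [y1, y2] z \<Longrightarrow> eval (Comp f [g1, g2]) xs z"
  by (rule eval_Comp[where ys="[y1, y2]"]) auto

lemma eval_Comp3:
  "eval g1 xs y1 \<Longrightarrow> eval g2 xs y2 \<Longrightarrow> eval g3 xs y3 \<Longrightarrow> eval f [y1, y2, y3] z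
    \<Longrightarrow> eval (Comp f [g1, g2, g3]) xs z"
  by (rule eval_Comp[where ys="[y1, y2, y3]"]) auto

lemma eval_Proj_0: "eval (Proj 0) (x # xs) x"
  using eval_Proj[of 0 "x # xs"] by simp

lemma eval_Proj_1: "eval (Proj 1) (y # x # xs) x"
  using eval_Proj[of 1 "y # x # xs"] by simp

lemma eval_Proj_2: "eval (Proj 2) (z # y # x # xs) x"
  using eval_Proj[of 2 "z # y # x # xs"] by simp

lemma eval_Proj_3: "eval (Proj 3) (w # z # y # x # xs) x"
  using eval_Proj[of 3 "w # z # y # x # xs"] by simp

lemma eval_Succ_Proj_0: "eval (Comp Succ [Proj 0]) (x # xs) (Suc x)"
  by (rule eval_Comp1[OF eval_Proj_0 eval_Succ])

fun r_const :: "nat \<Rightarrow> recf" where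
  "r_const 0 = Zero"
| "r_const (Suc k) = Comp Succ [r_const k]"

lemma eval_r_const: "eval (r_const k) xs k"
  by (induction k) (auto intro: eval_Zero eval_Comp1 eval_Succ)

definition r_add :: recf where
  "r_add = Prim (Proj 0) (Comp Succ [Proj 1])"

lemma eval_r_add: "eval r_add [x, y] (x + y)"
proof -
  have "eval r_add [x, y] (rec_nat y (\<lambda>_ s. Suc s) x)"
    unfolding r_add_def by (rule eval_Prim_rec_nat[OF eval_Proj_0 eval_Comp1[OF eval_Proj_1 eval_Succ]])
  moreover have "rec_nat y (\<lambda>_ s. Suc s) x = x + y"
    by (induction x) auto
  ultimately show ?thesis
    by simp
qed

definition r_mult :: recf where
  "r_mult = Prim Zero (Comp r_add [Proj 1, Proj 2])"

lemma eval_r_mult: "eval r_mult [x, y] (x * y)"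
proof -
  have "eval r_mult [x, y] (rec_nat 0 (\<lambda>_ s. s + y) x)"
    unfolding r_mult_def
    by (rule eval_Prim_rec_nat[OF eval_Zero eval_Comp2[OF eval_Proj_1 eval_Proj_2 eval_r_add]])
  moreover have "rec_nat 0 (\<lambda>_ s. s + y) x = x * y"
    by (induction x) auto
  ultimately show ?thesis
    by simp
qed

definition r_pred :: recf where
  "r_pred = Prim Zero (Proj 0)"

lemma eval_r_pred: "eval r_pred [x] (x - 1)"
proof -
  have "eval r_pred [x] (rec_nat 0 (\<lambda>j _. j) x)"
    unfolding r_pred_def by (rule eval_Prim_rec_nat[OF eval_Zero eval_Proj_0])
  then show ?thesis
    by (cases x) auto
qed

definition r_sgn :: recf where
  "r_sgn = Prim Zero (r_const 1)"

lemma eval_r_sgn: "eval r_sgn [x] (if x = 0 then 0 else 1)"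
proof -
  have "eval r_sgn [x] (rec_nat 0 (\<lambda>_ _. 1) x)"
    unfolding r_sgn_def by (rule eval_Prim_rec_nat[OF eval_Zero eval_r_const])
  then show ?thesis
    by (cases x) auto
qed

definition r_ifz :: recf where
  "r_ifz = Prim (Proj 0) (Proj 3)"

lemma eval_r_ifz: "eval r_ifz [x, a, b] (if x = 0 then a else b)"
proof -
  have "eval r_ifz [x, a, b] (rec_nat a (\<lambda>_ _. b) x)"
    unfolding r_ifz_def by (rule eval_Prim_rec_nat[OF eval_Proj_0 eval_Proj_3])
  then show ?thesis
    by (cases x) auto
qed

definition r_sub :: recf where
  "r_sub = Comp (Prim (Proj 0) (Comp r_pred [Proj 1])) [Proj 1, Proj 0]"

lemma eval_r_sub: "eval r_sub [x, y] (x - y)"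
proof -
  have "eval (Prim (Proj 0) (Comp r_pred [Proj 1])) [y, x] (rec_nat x (\<lambda>_ s. s - 1) y)"
    by (rule eval_Prim_rec_nat[OF eval_Proj_0 eval_Comp1[OF eval_Proj_1 eval_r_pred]])
  moreover have "rec_nat x (\<lambda>_ s. s - 1) y = x - y"
    by (induction y) auto
  ultimately show ?thesis
    unfolding r_sub_def using eval_Comp2[OF eval_Proj_1 eval_Proj_0] by simp
qed

definition r_not_le :: recf where
  "r_not_le = Comp r_sgn [r_sub]"

lemma eval_r_not_le: "eval r_not_le [x, y] (if x \<le> y then 0 else 1)"
  unfolding r_not_le_def using eval_Comp1[OF eval_r_sub eval_r_sgn] by simp

lemma eval_Mini_LEAST:
  assumes decides: "\<And>t. eval r (t # xs) (if P t then 0 else 1)" and "\<exists>t. P t"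
  shows "eval (Mini r) xs (LEAST t. P t)"
proof (rule eval_Mini)
  show "eval r ((LEAST t. P t) # xs) 0"
    using decides[of "LEAST t. P t"] LeastI_ex[OF \<open>\<exists>t. P t\<close>] by simp
  show "\<forall>m<LEAST t. P t. \<exists>y. eval r (m # xs) (Suc y)"
  proof (intro allI impI)
    fix m
    assume "m < (LEAST t. P t)"
    then have "\<not> P m"
      by (rule not_less_Least)
    then show "\<exists>y. eval r (m # xs) (Suc y)"
      using decides[of m] by auto
  qed
qed

section \<open>Evaluation with fuel\<close>

fun prim_opt :: "nat option \<Rightarrow> (nat \<Rightarrow> nat \<Rightarrow> nat option) \<Rightarrow> nat \<Rightarrow> nat option" where
  "prim_opt b h 0 = b"
| "prim_opt b h (Suc n) = (case prim_opt b h n of None \<Rightarrow> None | Some y \<Rightarrow> h n y)"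

text \<open>State of the search for the least \<open>m\<close> with \<open>h m = Some 0\<close> after inspecting all \<open>m < j\<close>:
  \<open>0\<close> while still searching, \<open>1\<close> once an undefined value was met, \<open>m + 2\<close> once \<open>m\<close> was found.\<close>
definition mu_step :: "nat option \<Rightarrow> nat \<Rightarrow> nat \<Rightarrow> nat" where
  "mu_step y j s = (if s = 0 then (case y of None \<Rightarrow> 1 | Some 0 \<Rightarrow> j + 2 | Some (Suc _) \<Rightarrow> 0) else s)"

fun mu_state :: "(nat \<Rightarrow> nat option) \<Rightarrow> nat \<Rightarrow> nat" where
  "mu_state h 0 = 0"
| "mu_state h (Suc j) = mu_step (h j) j (mu_state h j)"

text \<open>Evaluation with fuel \<open>t\<close>: every minimisation inspects only arguments below \<open>t\<close>.
  The result is \<open>None\<close> when this is not enough or the program is applied to too few arguments.\<close>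
fun eval_fuel :: "nat \<Rightarrow> recf \<Rightarrow> nat list \<Rightarrow> nat option" where
  "eval_fuel t Zero xs = Some 0"
| "eval_fuel t Succ xs = (case xs of [] \<Rightarrow> None | x # _ \<Rightarrow> Some (Suc x))"
| "eval_fuel t (Proj i) xs = (if i < length xs then Some (xs ! i) else None)"
| "eval_fuel t (Comp f gs) xs =
    (let rs = map (\<lambda>g. eval_fuel t g xs) gs in
     if None \<in> set rs then None else eval_fuel t f (map the rs))"
| "eval_fuel t (Prim f g) xs =
    (case xs of
      [] \<Rightarrow> None
    | n # ys \<Rightarrow> prim_opt (eval_fuel t f ys) (\<lambda>m y. eval_fuel t g (m # y # ys)) n)"
| "eval_fuel t (Mini f) xs =
    (let s = mu_state (\<lambda>m. eval_fuel t f (m # xs)) t in if 2 \<le> s then Some (s - 2) else None)"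

lemma rec_nat_mu_step: "rec_nat 0 (\<lambda>j. mu_step (h j) j) n = mu_state h n"
  by (induction n) simp_all

lemma mu_state_eq_0: "mu_state h j = 0 \<Longrightarrow> i < j \<Longrightarrow> \<exists>y. h i = Some (Suc y)"
proof (induction j)
  case (Suc j)
  then have "mu_state h j = 0" and "\<exists>y. h j = Some (Suc y)"
    by (auto simp: mu_step_def split: if_splits option.splits nat.splits)
  then show ?case
    using Suc by (auto simp: less_Suc_eq)
qed simp

lemma mu_state_eq_Suc_Suc:
  "mu_state h j = n + 2 \<Longrightarrow> h n = Some 0 \<and> (\<forall>i<n. \<exists>y. h i = Some (Suc y))"
proof (induction j)
  case (Suc j)
  show ?case
  proof (cases "mu_state h j = 0")
    case True
    then have "n = j \<and> h j = Some 0"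
      using Suc.prems by (auto simp: mu_step_def split: option.splits nat.splits)
    then show ?thesis
      using mu_state_eq_0[OF True] by auto
  next
    case False
    with Suc show ?thesis
      by (auto simp: mu_step_def)
  qed
qed simp

lemma mu_state_found:
  assumes "h n = Some 0" and "\<forall>i<n. \<exists>y. h i = Some (Suc y)"
  shows "mu_state h j = (if j \<le> n then 0 else n + 2)"
proof (induction j)
  case (Suc j)
  then show ?case
    using assms by (cases "j < n") (auto simp: mu_step_def not_less_eq_eq)
qed simp

lemma eval_Prim_if_prim_opt:
  assumes "\<And>y. b = Some y \<Longrightarrow> eval f ys y" and "\<And>m y z. h m y = Some z \<Longrightarrow> eval g (m # y # ys) z"
  shows "prim_opt b h k = Some z \<Longrightarrow> eval (Prim f g) (k # ys) z"
proof (induction k arbitrary: z)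
  case 0
  then show ?case
    using assms(1) by (auto intro: eval_Prim0)
next
  case (Suc k)
  then obtain y where "prim_opt b h k = Some y" and "h k y = Some z"
    by (auto split: option.splits)
  then show ?case
    using Suc.IH assms(2) by (auto intro: eval_PrimS)
qed

lemma eval_fuel_sound: "eval_fuel t c xs = Some y \<Longrightarrow> eval c xs y"
proof (induction t c xs arbitrary: y rule: eval_fuel.induct)
  case (4 t f gs xs)
  let ?rs = "map (\<lambda>g. eval_fuel t g xs) gs"
  have defined: "None \<notin> set ?rs" and f: "eval_fuel t f (map the ?rs) = Some y"
    using "4.prems" by (auto simp: Let_def split: if_splits)
  have "list_all2 (\<lambda>g y. eval g xs y) gs (map the ?rs)"
    unfolding list_all2_conv_all_nth
  proof (intro conjI allI impI)
    fix i
    assume "i < length gs"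
    then have "eval_fuel t (gs ! i) xs = Some (the (eval_fuel t (gs ! i) xs))"
      using defined by (metis length_map nth_map nth_mem option.collapse)
    then show "eval (gs ! i) xs (map the ?rs ! i)"
      using "4.IH"(1)[of "gs ! i"] \<open>i < length gs\<close> by auto
  qed simp
  then show ?case
    using "4.IH"(2)[OF refl defined f] by (rule eval_Comp)
next
  case (5 t f g xs)
  then obtain n ys where xs: "xs = n # ys"
    by (auto split: list.splits)
  let ?h = "\<lambda>m y. eval_fuel t g (m # y # ys)"
  have "eval f ys z" if "eval_fuel t f ys = Some z" for z
    using "5.IH"(1)[OF xs that] .
  moreover have "eval g (m # z # ys) w" if "?h m z = Some w" for m z w
    using "5.IH"(2)[OF xs that] .
  moreover have "prim_opt (eval_fuel t f ys) ?h n = Some y"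
    using "5.prems" unfolding xs by simp
  ultimately show ?case
    unfolding xs by (rule eval_Prim_if_prim_opt)
next
  case (6 t f xs)
  let ?h = "\<lambda>m. eval_fuel t f (m # xs)"
  have "mu_state ?h t = y + 2"
    using "6.prems" by (auto simp: Let_def split: if_splits)
  then have "?h y = Some 0" "\<forall>i<y. \<exists>z. ?h i = Some (Suc z)"
    using mu_state_eq_Suc_Suc by blast+
  then show ?case
    using "6.IH" by (metis eval_Mini)
qed (auto intro: eval.intros split: list.splits if_splits)

lemma eventually_list_all2:
  "list_all2 (\<lambda>x y. eventually (P x y) F) xs ys \<Longrightarrow> eventually (\<lambda>t. list_all2 (\<lambda>x y. P x y t) xs ys) F"
  by (induction xs arbitrary: ys) (auto simp: list_all2_Cons1 intro!: eventually_conj)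

lemma eval_imp_eventually_eval_fuel:
  "eval c xs y \<Longrightarrow> eventually (\<lambda>t. eval_fuel t c xs = Some y) sequentially"
proof (induction rule: eval.induct)
  case (eval_Comp xs gs ys f z)
  have "list_all2 (\<lambda>g y. eventually (\<lambda>t. eval_fuel t g xs = Some y) sequentially) gs ys"
    using eval_Comp.IH(1) by (rule list_all2_mono) blast
  then have "eventually (\<lambda>t. map (\<lambda>g. eval_fuel t g xs) gs = map Some ys) sequentially"
    by (rule eventually_mono[OF eventually_list_all2]) (simp add: list_all2_conv_all_nth list_eq_iff_nth_eq)
  then show ?case
    using eval_Comp.IH(2) by eventually_elim (simp add: Let_def comp_def)
next
  case (eval_PrimS f g n xs y z)
  from eval_PrimS.IH show ?case
    by eventually_elim simp
next
  case (eval_Mini f n xs)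
  have "eventually (\<lambda>t. \<forall>m\<in>{..<n}. \<exists>y. eval_fuel t f (m # xs) = Some (Suc y)) sequentially"
    using eval_Mini.IH(2) by (intro eventually_ball_finite) (auto elim!: eventually_mono)
  then show ?case
    using eval_Mini.IH(1) eventually_gt_at_top[of n]
    by eventually_elim (simp add: mu_state_found)
qed auto

lemma eval_deterministic:
  assumes "eval c xs y" and "eval c xs z"
  shows "y = z"
proof -
  have "eventually (\<lambda>t. Some y = Some z) sequentially"
    using eval_imp_eventually_eval_fuel[OF assms(1)] eval_imp_eventually_eval_fuel[OF assms(2)]
    by eventually_elim simp
  then show ?thesis
    by simp
qed

lemma ex_eval_Mini_iff:
  assumes decides: "\<And>t. eval r (t # xs) (if P t then 0 else 1)"
  shows "(\<exists>y. eval (Mini r) xs y) \<longleftrightarrow> (\<exists>t. P t)"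
proof
  assume "\<exists>y. eval (Mini r) xs y"
  then obtain y where "eval r (y # xs) 0"
    by (auto elim: eval.cases)
  then have "(if P y then 0 else 1) = (0 :: nat)"
    by (rule eval_deterministic[OF decides])
  then have "P y"
    by (simp split: if_splits)
  then show "\<exists>t. P t" ..
next
  assume "\<exists>t. P t"
  then show "\<exists>y. eval (Mini r) xs y"
    using eval_Mini_LEAST[OF decides] by blast
qed

section \<open>Evaluation with fuel is computed by a program without minimisation\<close>

fun enc_option :: "nat option \<Rightarrow> nat" where
  "enc_option None = 0"
| "enc_option (Some y) = Suc y"

lemma enc_option_eq_0_iff: "enc_option x = 0 \<longleftrightarrow> x = None"
  by (cases x) auto

lemma enc_option_eq_Suc_the: "x \<noteq> None \<Longrightarrow> enc_option x = Suc (the x)"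
  by (cases x) auto

definition proj_from :: "nat \<Rightarrow> nat \<Rightarrow> recf list" where
  "proj_from k a = map (\<lambda>i. Proj (k + i)) [0..<a]"

lemma eval_proj_from: "length xs = k + a \<Longrightarrow> list_all2 (\<lambda>g y. eval g xs y) (proj_from k a) (drop k xs)"
  unfolding proj_from_def list_all2_conv_all_nth by (auto intro: eval_Proj[simplified])

fun r_all_nonzero :: "recf list \<Rightarrow> recf" where
  "r_all_nonzero [] = r_const 1"
| "r_all_nonzero (r # rs) = Comp r_mult [Comp r_sgn [r], r_all_nonzero rs]"

lemma eval_r_all_nonzero:
  "list_all2 (\<lambda>r v. eval r xs v) rs vs \<Longrightarrow> eval (r_all_nonzero rs) xs (if 0 \<in> set vs then 0 else 1)"
proof (induction rs arbitrary: vs)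
  case Nil
  then show ?case
    using eval_r_const[of 1] by simp
next
  case (Cons r rs vs')
  then obtain v vs where "vs' = v # vs" and "eval r xs v" and "list_all2 (\<lambda>r v. eval r xs v) rs vs"
    by (auto simp: list_all2_Cons1)
  then have "eval (r_all_nonzero (r # rs)) xs ((if v = 0 then 0 else 1) * (if 0 \<in> set vs then 0 else 1))"
    using eval_Comp2[OF eval_Comp1[OF _ eval_r_sgn] Cons.IH eval_r_mult] by simp
  then show ?case
    using \<open>vs' = v # vs\<close> by (auto split: if_splits)
qed

definition r_mu_step :: "recf \<Rightarrow> recf" where
  "r_mu_step r =
    Comp r_ifz [Proj 1,
      Comp r_ifz [r, r_const 1, Comp r_ifz [Comp r_pred [r], Comp Succ [Comp Succ [Proj 0]], Zero]],
      Proj 1]"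

lemma eval_r_mu_step:
  assumes r: "\<And>j s. eval r (j # s # ys) (enc_option (h j))"
  shows "eval (r_mu_step r) (j # s # ys) (mu_step (h j) j s)"
proof -
  have "eval (Comp r_ifz [Comp r_pred [r], Comp Succ [Comp Succ [Proj 0]], Zero]) (j # s # ys)
      (if enc_option (h j) - 1 = 0 then Suc (Suc j) else 0)"
    by (rule eval_Comp3[OF eval_Comp1[OF r eval_r_pred] eval_Comp1[OF eval_Succ_Proj_0 eval_Succ] eval_Zero
        eval_r_ifz])
  then have "eval (Comp r_ifz [r, r_const 1, Comp r_ifz [Comp r_pred [r], Comp Succ [Comp Succ [Proj 0]], Zero]])
      (j # s # ys) (if enc_option (h j) = 0 then 1 else if enc_option (h j) - 1 = 0 then Suc (Suc j) else 0)"
    by (rule eval_Comp3[OF r eval_r_const _ eval_r_ifz])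
  then have "eval (r_mu_step r) (j # s # ys)
      (if s = 0 then (if enc_option (h j) = 0 then 1 else if enc_option (h j) - 1 = 0 then Suc (Suc j) else 0)
       else s)"
    unfolding r_mu_step_def by (rule eval_Comp3[OF eval_Proj_1 _ eval_Proj_1 eval_r_ifz])
  moreover have "(if s = 0 then (if enc_option (h j) = 0 then 1 else if enc_option (h j) - 1 = 0 then Suc (Suc j) else 0)
       else s) = mu_step (h j) j s"
    by (cases "h j") (auto simp: mu_step_def split: nat.split)
  ultimately show ?thesis
    by simp
qed

fun r_fuel :: "nat \<Rightarrow> recf \<Rightarrow> recf" where
  "r_fuel ar Zero = r_const 1"
| "r_fuel ar Succ = (if ar = 0 then Zero else Comp Succ [Comp Succ [Proj 1]])"
| "r_fuel ar (Proj i) = (if i < ar then Comp Succ [Proj (Suc i)] else Zero)"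
| "r_fuel ar (Comp f gs) =
    Comp r_mult [r_all_nonzero (map (r_fuel ar) gs),
      Comp (r_fuel (length gs) f) (Proj 0 # map (\<lambda>g. Comp r_pred [r_fuel ar g]) gs)]"
| "r_fuel ar (Prim f g) =
    (case ar of
      0 \<Rightarrow> Zero
    | Suc a \<Rightarrow>
        Comp (Prim (r_fuel a f)
            (Comp r_mult [Comp r_sgn [Proj 1],
              Comp (r_fuel (a + 2) g) (Proj 2 # Proj 0 # Comp r_pred [Proj 1] # proj_from 3 a)]))
          (Proj 1 # Proj 0 # proj_from 2 a))"
| "r_fuel ar (Mini f) =
    Comp r_pred
      [Comp (Prim Zero (r_mu_step (Comp (r_fuel (Suc ar) f) (Proj 2 # Proj 0 # proj_from 3 ar))))
        (Proj 0 # Proj 0 # proj_from 1 ar)]"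

lemma eval_r_fuel_Comp:
  assumes gs: "\<And>g. g \<in> set gs \<Longrightarrow> eval (r_fuel ar g) (t # xs) (enc_option (eval_fuel t g xs))"
    and f: "\<And>ys. length ys = length gs \<Longrightarrow>
      eval (r_fuel (length gs) f) (t # ys) (enc_option (eval_fuel t f ys))"
  shows "eval (r_fuel ar (Comp f gs)) (t # xs) (enc_option (eval_fuel t (Comp f gs) xs))"
proof -
  let ?rs = "map (\<lambda>g. eval_fuel t g xs) gs"
  let ?vs = "map (\<lambda>g. enc_option (eval_fuel t g xs)) gs"
  let ?ys = "map (\<lambda>g. enc_option (eval_fuel t g xs) - 1) gs"
  have "list_all2 (\<lambda>r v. eval r (t # xs) v) (map (r_fuel ar) gs) ?vs"
    by (simp add: list_all2_conv_all_nth gs)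
  then have "eval (r_all_nonzero (map (r_fuel ar) gs)) (t # xs) (if 0 \<in> set ?vs then 0 else 1)"
    by (rule eval_r_all_nonzero)
  moreover have "0 \<in> set ?vs \<longleftrightarrow> None \<in> set ?rs"
    by (induction gs) (auto simp: enc_option_eq_0_iff)
  ultimately have all: "eval (r_all_nonzero (map (r_fuel ar) gs)) (t # xs) (if None \<in> set ?rs then 0 else 1)"
    by (simp only:)
  have "list_all2 (\<lambda>g y. eval g (t # xs) y) (Proj 0 # map (\<lambda>g. Comp r_pred [r_fuel ar g]) gs) (t # ?ys)"
    using eval_Comp1[OF gs eval_r_pred]
    by (auto simp: list_all2_map1 list_all2_map2 eval_Proj_0 intro!: list.rel_refl_strong)
  then have outer: "eval (Comp (r_fuel (length gs) f) (Proj 0 # map (\<lambda>g. Comp r_pred [r_fuel ar g]) gs))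
      (t # xs) (enc_option (eval_fuel t f ?ys))"
    using f[of ?ys] by (auto intro: eval_Comp)
  have "?ys = map the ?rs" if "None \<notin> set ?rs"
    unfolding map_map using that by (intro map_cong) (auto simp: enc_option_eq_Suc_the image_iff)
  then have "(if None \<in> set ?rs then 0 else 1) * enc_option (eval_fuel t f ?ys)
      = enc_option (eval_fuel t (Comp f gs) xs)"
    by (cases "None \<in> set ?rs") (simp_all only: eval_fuel.simps Let_def if_True if_False
        mult_1 mult_0 enc_option.simps simp_thms)
  then show ?thesis
    using eval_Comp2[OF all outer eval_r_mult] by simp
qed

lemma eval_r_fuel_Prim:
  assumes f: "\<And>ys. length ys = a \<Longrightarrow> eval (r_fuel a f) (t # ys) (enc_option (eval_fuel t f ys))"
    and g: "\<And>zs. length zs = a + 2 \<Longrightarrow> eval (r_fuel (a + 2) g) (t # zs) (enc_option (eval_fuel t g zs))"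
    and ys: "length ys = a"
  shows "eval (r_fuel (Suc a) (Prim f g)) (t # n # ys) (enc_option (eval_fuel t (Prim f g) (n # ys)))"
proof -
  define F where "F j s = (if s = 0 then 0 else 1) * enc_option (eval_fuel t g (j # (s - 1) # ys))" for j s
  let ?step = "Comp r_mult [Comp r_sgn [Proj 1],
    Comp (r_fuel (a + 2) g) (Proj 2 # Proj 0 # Comp r_pred [Proj 1] # proj_from 3 a)]"
  have step: "eval ?step (j # s # t # ys) (F j s)" for j s
  proof -
    have "list_all2 (\<lambda>r y. eval r (j # s # t # ys) y)
        (Proj 2 # Proj 0 # Comp r_pred [Proj 1] # proj_from 3 a) (t # j # (s - 1) # ys)"
      using eval_proj_from[of "j # s # t # ys" 3 a] ys eval_Comp1[OF eval_Proj_1 eval_r_pred]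
      by (simp add: eval_Proj_0 eval_Proj_2)
    then have "eval (Comp (r_fuel (a + 2) g) (Proj 2 # Proj 0 # Comp r_pred [Proj 1] # proj_from 3 a))
        (j # s # t # ys) (enc_option (eval_fuel t g (j # (s - 1) # ys)))"
      using g[of "j # (s - 1) # ys"] ys by (auto intro: eval_Comp)
    then show ?thesis
      unfolding F_def by (rule eval_Comp2[OF eval_Comp1[OF eval_Proj_1 eval_r_sgn] _ eval_r_mult])
  qed
  have "rec_nat (enc_option (eval_fuel t f ys)) F k
      = enc_option (prim_opt (eval_fuel t f ys) (\<lambda>m y. eval_fuel t g (m # y # ys)) k)" for k
    by (induction k) (auto simp: F_def split: option.splits)
  then have "eval (Prim (r_fuel a f) ?step) (n # t # ys) (enc_option (eval_fuel t (Prim f g) (n # ys)))"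
    using eval_Prim_rec_nat[OF f[OF ys] step, of n] by simp
  moreover have "list_all2 (\<lambda>r y. eval r (t # n # ys) y) (Proj 1 # Proj 0 # proj_from 2 a) (n # t # ys)"
    using eval_proj_from[of "t # n # ys" 2 a] ys eval_Proj_1[of t n] by (simp add: eval_Proj_0)
  ultimately show ?thesis
    by (auto intro: eval_Comp)
qed

lemma eval_r_fuel_Mini:
  assumes f: "\<And>j. eval (r_fuel (Suc ar) f) (t # j # xs) (enc_option (eval_fuel t f (j # xs)))"
    and xs: "length xs = ar"
  shows "eval (r_fuel ar (Mini f)) (t # xs) (enc_option (eval_fuel t (Mini f) xs))"
proof -
  let ?h = "\<lambda>j. eval_fuel t f (j # xs)"
  let ?r = "Comp (r_fuel (Suc ar) f) (Proj 2 # Proj 0 # proj_from 3 ar)"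
  have "eval ?r (j # s # t # xs) (enc_option (?h j))" for j s
  proof -
    have "list_all2 (\<lambda>r y. eval r (j # s # t # xs) y) (Proj 2 # Proj 0 # proj_from 3 ar) (t # j # xs)"
      using eval_proj_from[of "j # s # t # xs" 3 ar] xs by (simp add: eval_Proj_0 eval_Proj_2)
    then show ?thesis
      using f by (auto intro: eval_Comp)
  qed
  then have "eval (r_mu_step ?r) (j # s # t # xs) (mu_step (?h j) j s)" for j s
    by (rule eval_r_mu_step)
  then have "eval (Prim Zero (r_mu_step ?r)) (t # t # xs) (rec_nat 0 (\<lambda>j. mu_step (?h j) j) t)"
    by (rule eval_Prim_rec_nat[OF eval_Zero])
  then have "eval (Prim Zero (r_mu_step ?r)) (t # t # xs) (mu_state ?h t)"
    by (simp only: rec_nat_mu_step)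
  moreover have "list_all2 (\<lambda>r y. eval r (t # xs) y) (Proj 0 # Proj 0 # proj_from 1 ar) (t # t # xs)"
    using eval_proj_from[of "t # xs" 1 ar] xs by (simp add: eval_Proj_0)
  ultimately have "eval (Comp (Prim Zero (r_mu_step ?r)) (Proj 0 # Proj 0 # proj_from 1 ar)) (t # xs)
      (mu_state ?h t)"
    by (auto intro: eval_Comp)
  then have "eval (r_fuel ar (Mini f)) (t # xs) (mu_state ?h t - 1)"
    unfolding r_fuel.simps by (rule eval_Comp1[OF _ eval_r_pred])
  moreover have "mu_state ?h t - 1 = enc_option (eval_fuel t (Mini f) xs)"
    by (simp add: Let_def) linarith
  ultimately show ?thesis
    by simp
qed

lemma eval_r_fuel: "length xs = ar \<Longrightarrow> eval (r_fuel ar c) (t # xs) (enc_option (eval_fuel t c xs))"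
proof (induction c arbitrary: ar xs)
  case Zero
  then show ?case
    using eval_r_const[of 1] by simp
next
  case Succ
  then show ?case
    using eval_Comp1[OF eval_Comp1[OF eval_Proj_1 eval_Succ] eval_Succ]
    by (cases xs) (auto intro: eval_Zero)
next
  case (Proj i)
  then show ?case
    using eval_Comp1[OF eval_Proj eval_Succ, of "Suc i" "t # xs"] by (auto intro: eval_Zero)
next
  case (Comp f gs)
  show ?case
  proof (rule eval_r_fuel_Comp)
    show "eval (r_fuel ar g) (t # xs) (enc_option (eval_fuel t g xs))" if "g \<in> set gs" for g
      using Comp.IH(2) Comp.prems that by blast
    show "eval (r_fuel (length gs) f) (t # ys) (enc_option (eval_fuel t f ys))" if "length ys = length gs" for ys
      using Comp.IH(1)[of ys] that by simp
  qed
next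
  case (Prim f g)
  then show ?case
  proof (cases xs)
    case Nil
    then show ?thesis
      using Prim.prems by (auto intro: eval_Zero)
  next
    case (Cons n ys)
    then have "ar = Suc (length ys)"
      using Prim.prems by simp
    show ?thesis
      unfolding Cons \<open>ar = Suc (length ys)\<close> by (rule eval_r_fuel_Prim) (auto intro: Prim.IH)
  qed
next
  case (Mini f)
  show ?case
    using Mini.IH[of "_ # xs" "Suc ar"] Mini.prems by (intro eval_r_fuel_Mini) auto
qed

section \<open>Computability of the star-transform\<close>

definition r_iterate :: "recf \<Rightarrow> recf" where
  "r_iterate c = Prim (Proj 0) (Comp c [Proj 1])"

lemma eval_r_iterate:
  assumes "\<And>n. eval c [n] (f n)"
  shows "eval (r_iterate c) [k, n] ((f ^^ k) n)"
proof -
  have "eval (r_iterate c) [k, n] (rec_nat n (\<lambda>_ s. f s) k)"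
    unfolding r_iterate_def by (rule eval_Prim_rec_nat[OF eval_Proj_0 eval_Comp1[OF eval_Proj_1 assms]])
  moreover have "rec_nat n (\<lambda>_ s. f s) k = (f ^^ k) n"
    by (induction k) auto
  ultimately show ?thesis
    by simp
qed

lemma computable_star:
  assumes "sublinear_order f" and "computable f"
  shows "computable (star f)"
proof -
  obtain c where c: "\<And>n. eval c [n] (f n)"
    using assms(2) unfolding computable_def by blast
  have "eval (Comp r_not_le [r_iterate c, r_const (pf f)]) (k # [n]) (if (f ^^ k) n \<le> pf f then 0 else 1)" for k n
    by (rule eval_Comp2[OF eval_r_iterate[OF c] eval_r_const eval_r_not_le])
  then have "eval (Mini (Comp r_not_le [r_iterate c, r_const (pf f)])) [n] (star f n)" for n
    unfolding star_def using ex_funpow_le_pf[OF assms(1)] by (rule eval_Mini_LEAST)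
  then show ?thesis
    unfolding computable_def by blast
qed

lemma rec_nat_bounded_search:
  "rec_nat 0 (\<lambda>j s. if s = 0 then (if P j then Suc j else 0) else s) m
    = (if \<exists>b<m. P b then Suc (LEAST b. P b) else 0)"
proof (induction m)
  case (Suc m)
  show ?case
  proof (cases "\<exists>b<m. P b")
    case True
    then have "\<exists>b<Suc m. P b"
      using less_SucI by blast
    with Suc True show ?thesis
      by simp
  next
    case False
    then have "P m \<Longrightarrow> (LEAST b. P b) = m"
      by (intro Least_equality) (auto simp: not_less[symmetric])
    moreover have "(\<exists>b<Suc m. P b) \<longleftrightarrow> P m"
      using False less_Suc_eq by auto
    ultimately show ?thesis
      using Suc False by simp
  qed
qed simp

text \<open>For \<open>c\<close> halting on \<open>[a, b]\<close> exactly when \<open>f a \<le> b\<close>, a nonzero \<open>bound_within c t a\<close> is one more than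
  an upper bound for \<open>f a\<close> certified with fuel \<open>t\<close>; \<open>0\<close> means that none was found.\<close>
definition bound_within :: "recf \<Rightarrow> nat \<Rightarrow> nat \<Rightarrow> nat" where
  "bound_within c t a =
    (if \<exists>b<t. eval_fuel t c [a, b] \<noteq> None then Suc (LEAST b. eval_fuel t c [a, b] \<noteq> None) else 0)"

definition iterate_bound :: "recf \<Rightarrow> nat \<Rightarrow> nat \<Rightarrow> nat \<Rightarrow> nat" where
  "iterate_bound c t n k = rec_nat (Suc n) (\<lambda>_ s. if s = 0 then 0 else bound_within c t (s - 1)) k"

definition r_bound_within :: "recf \<Rightarrow> recf" where
  "r_bound_within c =
    Comp (Prim Zero
      (Comp r_ifz [Proj 1,
        Comp r_ifz [Comp r_sgn [Comp (r_fuel 2 c) [Proj 2, Proj 3, Proj 0]], Zero, Comp Succ [Proj 0]],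
        Proj 1]))
    [Proj 0, Proj 0, Proj 1]"

lemma eval_r_bound_within: "eval (r_bound_within c) [t, a] (bound_within c t a)"
proof -
  let ?halts = "\<lambda>j. eval_fuel t c [a, j] \<noteq> None"
  have fuel: "eval (r_fuel 2 c) [t, a, j] (enc_option (eval_fuel t c [a, j]))" for j
    using eval_r_fuel[of "[a, j]" 2] by simp
  have halts_value: "(if (if enc_option (eval_fuel t c [a, j]) = 0 then 0 else 1 :: nat) = 0 then 0 else Suc j)
      = (if ?halts j then Suc j else 0)" for j
    by (simp add: enc_option_eq_0_iff)
  have "eval (Comp r_ifz [Comp r_sgn [Comp (r_fuel 2 c) [Proj 2, Proj 3, Proj 0]], Zero, Comp Succ [Proj 0]])
      [j, s, t, a] (if ?halts j then Suc j else 0)" for j s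
    using eval_Comp3[OF eval_Comp1[OF eval_Comp3[OF eval_Proj_2 eval_Proj_3 eval_Proj_0 fuel] eval_r_sgn]
        eval_Zero eval_Succ_Proj_0 eval_r_ifz]
    unfolding halts_value .
  then have "eval (Comp r_ifz [Proj 1,
        Comp r_ifz [Comp r_sgn [Comp (r_fuel 2 c) [Proj 2, Proj 3, Proj 0]], Zero, Comp Succ [Proj 0]],
        Proj 1]) [j, s, t, a] (if s = 0 then (if ?halts j then Suc j else 0) else s)" for j s
    by (rule eval_Comp3[OF eval_Proj_1 _ eval_Proj_1 eval_r_ifz])
  from eval_Prim_rec_nat[OF eval_Zero this, of t]
  show ?thesis
    unfolding r_bound_within_def bound_within_def rec_nat_bounded_search
    by (rule eval_Comp3[OF eval_Proj_0 eval_Proj_0 eval_Proj_1])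
qed

definition r_iterate_bound :: "recf \<Rightarrow> recf" where
  "r_iterate_bound c =
    Comp (Prim (Comp Succ [Proj 1])
      (Comp r_ifz [Proj 1, Zero, Comp (r_bound_within c) [Proj 2, Comp r_pred [Proj 1]]]))
    [Proj 2, Proj 0, Proj 1]"

lemma eval_r_iterate_bound: "eval (r_iterate_bound c) [t, n, k] (iterate_bound c t n k)"
proof -
  have "eval (Comp r_ifz [Proj 1, Zero, Comp (r_bound_within c) [Proj 2, Comp r_pred [Proj 1]]])
      [i, s, t, n] (if s = 0 then 0 else bound_within c t (s - 1))" for i s
    by (rule eval_Comp3[OF eval_Proj_1 eval_Zero
          eval_Comp2[OF eval_Proj_2 eval_Comp1[OF eval_Proj_1 eval_r_pred] eval_r_bound_within] eval_r_ifz])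
  from eval_Prim_rec_nat[OF eval_Comp1[OF eval_Proj_1 eval_Succ] this, of k]
  show ?thesis
    unfolding r_iterate_bound_def iterate_bound_def
    by (rule eval_Comp3[OF eval_Proj_2 eval_Proj_0 eval_Proj_1])
qed

context
  fixes f :: "nat \<Rightarrow> nat" and c :: recf
  assumes halts_iff: "\<And>n k. f n \<le> k \<longleftrightarrow> (\<exists>y. eval c [n, k] y)"
begin

lemma le_if_eval_fuel: "eval_fuel t c [a, b] \<noteq> None \<Longrightarrow> f a \<le> b"
  using eval_fuel_sound halts_iff by blast

lemma bound_within_gt:
  assumes "bound_within c t a \<noteq> 0"
  shows "f a < bound_within c t a"
proof -
  let ?halts = "\<lambda>b. eval_fuel t c [a, b] \<noteq> None"
  have "\<exists>b<t. ?halts b"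
  proof (rule ccontr)
    assume "\<not> (\<exists>b<t. ?halts b)"
    then have "bound_within c t a = 0"
      unfolding bound_within_def by (rule if_not_P)
    with assms show False ..
  qed
  then have bound_eq: "bound_within c t a = Suc (LEAST b. ?halts b)"
    unfolding bound_within_def by (rule if_P)
  from \<open>\<exists>b<t. ?halts b\<close> obtain b where "?halts b"
    by blast
  then have "?halts (LEAST b. ?halts b)"
    by (rule LeastI)
  then have "f a \<le> (LEAST b. ?halts b)"
    by (rule le_if_eval_fuel)
  with bound_eq show ?thesis
    by simp
qed

lemma eventually_bound_within: "eventually (\<lambda>t. bound_within c t a = Suc (f a)) sequentially"
proof -
  obtain y where "eval c [a, f a] y"
    using halts_iff by blast
  from eval_imp_eventually_eval_fuel[OF this] eventually_gt_at_top[of "f a"] show ?thesis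
  proof eventually_elim
    case (elim t)
    then have "(LEAST b. eval_fuel t c [a, b] \<noteq> None) = f a"
      by (intro Least_equality le_if_eval_fuel) simp_all
    with elim show ?case
      unfolding bound_within_def by auto
  qed
qed

lemma iterate_bound_gt:
  assumes "mono f"
  shows "iterate_bound c t n k \<noteq> 0 \<Longrightarrow> (f ^^ k) n < iterate_bound c t n k"
proof (induction k)
  case (Suc k)
  let ?b = "iterate_bound c t n k"
  have step: "iterate_bound c t n (Suc k) = (if ?b = 0 then 0 else bound_within c t (?b - 1))"
    by (simp add: iterate_bound_def)
  with Suc.prems have "?b \<noteq> 0" and "bound_within c t (?b - 1) \<noteq> 0"
    by (auto split: if_splits)
  then have "f ((f ^^ k) n) \<le> f (?b - 1)" and "f (?b - 1) < bound_within c t (?b - 1)"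
    using Suc.IH monoD[OF assms] bound_within_gt by auto
  with step \<open>?b \<noteq> 0\<close> show ?case
    by simp
qed (simp add: iterate_bound_def)

lemma eventually_iterate_bound: "eventually (\<lambda>t. iterate_bound c t n k = Suc ((f ^^ k) n)) sequentially"
proof (induction k)
  case (Suc k)
  with eventually_bound_within[of "(f ^^ k) n"] show ?case
    by eventually_elim (simp add: iterate_bound_def)
qed (simp add: iterate_bound_def)

lemma funpow_le_iff_ex_iterate_bound:
  assumes "mono f"
  shows "(f ^^ k) n \<le> p \<longleftrightarrow> (\<exists>t. iterate_bound c t n k \<noteq> 0 \<and> iterate_bound c t n k \<le> Suc p)"
proof
  assume "(f ^^ k) n \<le> p"
  with eventually_iterate_bound[of n k] have "eventually (\<lambda>t. iterate_bound c t n k \<noteq> 0 \<and> iterate_bound c t n k \<le> Suc p) sequentially"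
    by (auto elim: eventually_mono)
  then show "\<exists>t. iterate_bound c t n k \<noteq> 0 \<and> iterate_bound c t n k \<le> Suc p"
    by (rule eventually_happens'[OF sequentially_bot])
next
  assume "\<exists>t. iterate_bound c t n k \<noteq> 0 \<and> iterate_bound c t n k \<le> Suc p"
  then show "(f ^^ k) n \<le> p"
    using iterate_bound_gt[OF assms] by fastforce
qed

end

definition r_funpow_le :: "recf \<Rightarrow> nat \<Rightarrow> recf" where
  "r_funpow_le c p =
    Mini (Comp r_ifz [r_iterate_bound c, r_const 1, Comp r_not_le [r_iterate_bound c, r_const (Suc p)]])"

lemma ex_eval_r_funpow_le_iff:
  assumes "mono f" and "\<And>n k. f n \<le> k \<longleftrightarrow> (\<exists>y. eval c [n, k] y)"
  shows "(\<exists>y. eval (r_funpow_le c p) [n, k] y) \<longleftrightarrow> (f ^^ k) n \<le> p"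
proof -
  let ?b = "\<lambda>t. iterate_bound c t n k"
  have value_eq: "(if ?b t = 0 then 1 else if ?b t \<le> Suc p then 0 else 1)
      = (if ?b t \<noteq> 0 \<and> ?b t \<le> Suc p then 0 else 1 :: nat)" for t
    by simp
  have "eval (Comp r_ifz [r_iterate_bound c, r_const 1, Comp r_not_le [r_iterate_bound c, r_const (Suc p)]])
      [t, n, k] (if ?b t \<noteq> 0 \<and> ?b t \<le> Suc p then 0 else 1)" for t
    using eval_Comp3[OF eval_r_iterate_bound[of c t n k] eval_r_const[of 1]
        eval_Comp2[OF eval_r_iterate_bound[of c t n k] eval_r_const[of "Suc p"] eval_r_not_le] eval_r_ifz]
    unfolding value_eq .
  then have "(\<exists>y. eval (r_funpow_le c p) [n, k] y) \<longleftrightarrow> (\<exists>t. ?b t \<noteq> 0 \<and> ?b t \<le> Suc p)"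
    unfolding r_funpow_le_def by (rule ex_eval_Mini_iff)
  also have "\<dots> \<longleftrightarrow> (f ^^ k) n \<le> p"
    using funpow_le_iff_ex_iterate_bound[OF assms(2,1)] by simp
  finally show ?thesis .
qed

lemma upper_semicomputable_star:
  assumes "sublinear_order f" and "upper_semicomputable f"
  shows "upper_semicomputable (star f)"
proof -
  obtain c where "\<And>n k. f n \<le> k \<longleftrightarrow> (\<exists>y. eval c [n, k] y)"
    using assms(2) unfolding upper_semicomputable_def by blast
  then have "star f n \<le> k \<longleftrightarrow> (\<exists>y. eval (r_funpow_le c (pf f)) [n, k] y)" for n k
    using star_le_iff[OF assms(1)] ex_eval_r_funpow_le_iff[OF sublinear_order_imp_mono[OF assms(1)]] by simp
  then show ?thesis
    unfolding upper_semicomputable_def by blast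
qed

theorem lemma3:
  fixes f :: "nat \<Rightarrow> nat"
  assumes "sublinear_order f"
  shows "sublinear_order (star f)
     \<and> (computable f \<longrightarrow> computable (star f))
     \<and> (upper_semicomputable f \<longrightarrow> upper_semicomputable (star f))
     \<and> (\<forall>n i. star f ((f ^^ i) n) \<le> star f n \<and> star f n \<le> star f ((f ^^ i) n) + i)"
proof -
  have "star f ((f ^^ i) n) \<le> star f n \<and> star f n \<le> star f ((f ^^ i) n) + i" for n i
    using star_funpow[OF assms, of i n] by arith
  then show ?thesis
    using sublinear_order_star[OF assms] computable_star[OF assms] upper_semicomputable_star[OF assms]
    by blast
qed

end
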